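(* Let $K,L,T$ be positive integers with $L\le K$, let $\varphi=T-1-KL+2K$, and for $r\in\{1,\ldots,\min\{K,T\}\}$ let $N(r)$ be the number of distinct integers in $\operatorname{Set}(\alpha)+\operatorname{Set}(\beta)$ for the $\mathsf{GASP}_r$ vectors $(\alpha,\beta)$. Suppose $\varphi\ge1$. Then for every integer $r$ with $1\le r\le\min\{K,T,\varphi\}$ we have $N(\min\{K,T,\varphi\})\le N(r)$.
   Context: The code $\mathsf{GASP}_r$ ($L\le K$, $1\le r\le\min\{K,T\}$) consists of $\alpha=(\alpha_{\mathrm p}\mid\alpha_{\mathrm s})$, $\beta=(\beta_{\mathrm p}\mid\beta_{\mathrm s})$ with $\alpha_{\mathrm p}=(0,1,\ldots,K-1)$; $\alpha_{\mathrm s}$ the $T$ smallest elements of $\{KL+j+Kt: 0\le j\le r-1,\ t\in\mathbb{Z}_{\ge0}\}$ in increasing order; $\beta_{\mathrm p}=(0,K,\ldots,K(L-1))$; $\beta_{\mathrm s}=(KL,\ldots,KL+T-1)$. $\operatorname{Set}(v)$ is the set of entries of $v$, $A+B=\{a+b\}$. *)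

theory Defs
  imports Main "HOL-Library.Infinite_Set"
begin

definition gasp_S :: "nat \<Rightarrow> nat \<Rightarrow> nat \<Rightarrow> nat set" where
  "gasp_S K L r = {K*L + j + K*t | j t. j < r}"

definition gasp_alpha_p :: "nat \<Rightarrow> nat list" where
  "gasp_alpha_p K = [0..<K]"

(* alpha_s = the T smallest elements of gasp_S in increasing order;
   enumerate S i is the i-th smallest element (0-based) of an infinite set S *)
definition gasp_alpha_s :: "nat \<Rightarrow> nat \<Rightarrow> nat \<Rightarrow> nat \<Rightarrow> nat list" where
  "gasp_alpha_s K L T r = map (enumerate (gasp_S K L r)) [0..<T]"

definition gasp_alpha :: "nat \<Rightarrow> nat \<Rightarrow> nat \<Rightarrow> nat \<Rightarrow> nat list" where
  "gasp_alpha K L T r = gasp_alpha_p K @ gasp_alpha_s K L T r"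

definition gasp_beta :: "nat \<Rightarrow> nat \<Rightarrow> nat \<Rightarrow> nat list" where
  "gasp_beta K L T = map (\<lambda>l. K*l) [0..<L] @ [K*L..<K*L+T]"

definition sumset :: "nat set \<Rightarrow> nat set \<Rightarrow> nat set" where
  "sumset A B = {a + b | a b. a \<in> A \<and> b \<in> B}"

definition gasp_N :: "nat \<Rightarrow> nat \<Rightarrow> nat \<Rightarrow> nat \<Rightarrow> nat" where
  "gasp_N K L T r = card (sumset (set (gasp_alpha K L T r)) (set (gasp_beta K L T)))"

end

theory Submission
  imports Defs
begin

(* Write c = K L and let g = block_enum K r enumerate the blocks {K t, ..., K t + r - 1},
   so that Set(alpha_s) = c + g {0..<T}.  The sums Set(alpha_p) + Set(beta) fill the
   interval [0, c + T + K - 1), and Set(alpha_s) + Set(beta_s) = 2 c + D_r with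
   D_r = g {0..<T} + {0..<T} = secret_sumset K T r.  A cross sum c + g i + K l from
   Set(alpha_s) + Set(beta_p) is either below 2 c - K + r, hence in the interval because
   phi >= r, or equal to 2 c + g i' with i' <= i.  So N(r) = min (2 c) (c + T + K - 1) + |D_r|.
   Finally D_r is the interval [0, T + g (T - 1)) with a gap of K - (r + T - 1) numbers
   (if positive) at the end of each of the first (T - 1) div r blocks of length K, so
   |D_r| = 2 T - 1 + ((T - 1) div r) * min (T - 1) (K - r), which is non-increasing in r. *)

lemma sumsetI: "a \<in> A \<Longrightarrow> b \<in> B \<Longrightarrow> x = a + b \<Longrightarrow> x \<in> sumset A B"
  unfolding sumset_def by blast

lemma sumsetE:
  assumes "x \<in> sumset A B"
  obtains a b where "a \<in> A" "b \<in> B" "x = a + b"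
  using assms unfolding sumset_def by blast

lemma sumset_Un_left: "sumset (A \<union> B) C = sumset A C \<union> sumset B C"
  unfolding sumset_def by blast

lemma sumset_Un_right: "sumset A (B \<union> C) = sumset A B \<union> sumset A C"
  unfolding sumset_def by blast

lemma sumset_image_add:
  "sumset ((+) a ` A) ((+) b ` B) = (+) (a + b) ` sumset A B"
  by (auto elim!: sumsetE intro: sumsetI)

lemma sumset_lessThan_multiples:
  "sumset {..<K} ((*) K ` {..<L}) = {..<K * L}"
proof -
  have "x \<in> sumset {..<K} ((*) K ` {..<L})" if "x < K * L" for x
  proof (rule sumsetI)
    show "x mod K \<in> {..<K}" using that by (cases "K = 0") auto
    show "K * (x div K) \<in> (*) K ` {..<L}"
      using that by (intro imageI) (simp add: less_mult_imp_div_less mult.commute)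
  qed simp
  moreover have "a + K * l < K * L" if "a < K" "l < L" for a l
  proof -
    have "a + K * l < K * Suc l" using that by simp
    also have "\<dots> \<le> K * L" using that by (intro mult_le_mono2) simp
    finally show ?thesis .
  qed
  ultimately show ?thesis by (auto elim!: sumsetE)
qed

lemma sumset_lessThan_shifted_lessThan:
  assumes "0 < m" "0 < n"
  shows "sumset {..<m} ((+) c ` {..<n}) = {c..<c + n + m - 1}"
proof -
  have "x \<in> sumset {..<m} ((+) c ` {..<n})" if "c \<le> x" "x < c + n + m - 1" for x
  proof (cases "x < c + n")
    case True
    show ?thesis
      by (rule sumsetI[of 0 _ x])
        (use assms that True in \<open>auto intro: image_eqI[of _ _ "x - c"]\<close>)
  next
    case False
    show ?thesis
      by (rule sumsetI[of "x - (c + n - 1)" _ "c + (n - 1)"])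
        (use assms that False in \<open>auto intro: image_eqI[of _ _ "n - 1"]\<close>)
  qed
  then show ?thesis by (auto elim!: sumsetE)
qed

lemma enumerate_range_strict_mono:
  fixes f :: "nat \<Rightarrow> nat"
  assumes "strict_mono f"
  shows "enumerate (range f) n = f n"
proof (induction n)
  case 0
  show ?case unfolding enumerate_0
    by (rule Least_equality) (auto simp: assms strict_mono_less_eq)
next
  case (Suc n)
  have "infinite (range f)"
    using assms strict_mono_imp_inj_on range_inj_infinite by blast
  show ?case unfolding enumerate_Suc''[OF \<open>infinite (range f)\<close>] Suc
    by (rule Least_equality)
      (auto simp: assms strict_mono_less strict_mono_less_eq Suc_le_eq)
qed

lemma card_div_mod_box:
  assumes "0 < K"
  shows "card {y :: nat. y div K < Q \<and> a \<le> y mod K} = Q * (K - a)"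
proof -
  let ?box = "{y. y div K < Q \<and> a \<le> y mod K}"
  have "inj_on (\<lambda>y. (y div K, y mod K)) ?box"
    by (rule inj_onI) (metis div_mult_mod_eq prod.inject)
  moreover have "(\<lambda>y. (y div K, y mod K)) ` ?box = {..<Q} \<times> {a..<K}"
  proof (intro equalityI subsetI)
    fix p assume "p \<in> {..<Q} \<times> {a..<K}"
    then obtain t j where "p = (t, j)" "t < Q" "a \<le> j" "j < K" by auto
    then show "p \<in> (\<lambda>y. (y div K, y mod K)) ` ?box"
      by (intro rev_image_eqI[of "j + K * t"]) simp_all
  qed (use assms in auto)
  ultimately show ?thesis
    using card_image by fastforce
qed

lemma card_lessThan_Un_image_add:
  assumes "finite D" "{..<n} \<subseteq> D" "m \<le> a + n"
  shows "card ({..<m} \<union> (+) a ` D) = min a m + card D"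
proof -
  have "{..<m} \<union> (+) a ` D = {..<min a m} \<union> (+) a ` D"
  proof (intro equalityI subsetI)
    fix x assume "x \<in> {..<m} \<union> (+) a ` D"
    then show "x \<in> {..<min a m} \<union> (+) a ` D"
      using assms(2,3) by (cases "x < a") (auto intro!: rev_image_eqI[of "x - a"])
  qed auto
  moreover have "card ({..<min a m} \<union> (+) a ` D) = min a m + card D"
    using assms(1) by (subst card_Un_disjoint) (auto simp: card_image)
  ultimately show ?thesis by simp
qed

definition block_enum :: "nat \<Rightarrow> nat \<Rightarrow> nat \<Rightarrow> nat" where
  "block_enum K r i = i mod r + K * (i div r)"

lemma block_enum_eq: "j < r \<Longrightarrow> block_enum K r (t * r + j) = j + K * t"
  unfolding block_enum_def by simp

lemma strict_mono_block_enum: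
  assumes "0 < r" "r \<le> K"
  shows "strict_mono (block_enum K r)"
proof (rule strict_monoI)
  fix i i' :: nat
  assume "i < i'"
  then have le: "i div r \<le> i' div r" by (simp add: div_le_mono)
  show "block_enum K r i < block_enum K r i'"
  proof (cases "i div r = i' div r")
    case True
    then have "i mod r < i' mod r"
      using \<open>i < i'\<close> by (metis div_mult_mod_eq nat_add_left_cancel_less)
    then show ?thesis unfolding block_enum_def using True by simp
  next
    case False
    have "i mod r < K"
      using assms mod_less_divisor order.strict_trans2 by blast
    then have "i mod r + K * (i div r) < K * Suc (i div r)"
      by simp
    also have "\<dots> \<le> K * (i' div r)"
      using le False by (intro mult_le_mono2) simp
    finally show ?thesis unfolding block_enum_def by simp
  qed
qed

lemma gasp_S_eq_range:
  assumes "0 < r"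
  shows "gasp_S K L r = range (\<lambda>i. K * L + block_enum K r i)"
proof -
  have "(\<exists>j t. x = K * L + j + K * t \<and> j < r) \<longleftrightarrow> (\<exists>i. x = K * L + block_enum K r i)" for x
    using assms block_enum_eq unfolding block_enum_def
    by (metis add.assoc mod_less_divisor)
  then show ?thesis unfolding gasp_S_def by auto
qed

lemma set_gasp_alpha:
  assumes "0 < r" "r \<le> K"
  shows "set (gasp_alpha K L T r) = {..<K} \<union> (+) (K * L) ` block_enum K r ` {..<T}"
proof -
  have "strict_mono (\<lambda>i. K * L + block_enum K r i)"
    using strict_mono_block_enum[OF assms] by (simp add: strict_mono_def)
  then have "enumerate (gasp_S K L r) i = K * L + block_enum K r i" for i
    unfolding gasp_S_eq_range[OF assms(1)] by (rule enumerate_range_strict_mono)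
  then show ?thesis
    unfolding gasp_alpha_def gasp_alpha_p_def gasp_alpha_s_def by (auto simp: image_image)
qed

lemma set_gasp_beta:
  "set (gasp_beta K L T) = (*) K ` {..<L} \<union> (+) (K * L) ` {..<T}"
  unfolding gasp_beta_def by (auto simp: lessThan_atLeast0)

definition secret_sumset :: "nat \<Rightarrow> nat \<Rightarrow> nat \<Rightarrow> nat set" where
  "secret_sumset K T r = sumset (block_enum K r ` {..<T}) {..<T}"

lemma secret_sumset_subset:
  assumes "0 < r" "r \<le> K"
  shows "secret_sumset K T r \<subseteq>
    {..<T + block_enum K r (T - 1)} - {y. y div K < (T - 1) div r \<and> r + T - 1 \<le> y mod K}"
proof
  fix y assume "y \<in> secret_sumset K T r"
  then obtain i u where iu: "i < T" "u < T" "y = block_enum K r i + u"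
    unfolding secret_sumset_def by (auto elim!: sumsetE)
  have "block_enum K r i \<le> block_enum K r (T - 1)"
    using iu(1) strict_mono_block_enum[OF assms] by (simp add: strict_mono_less_eq)
  moreover have "y = (i mod r + u) + K * (i div r)"
    unfolding iu(3) block_enum_def by simp
  then have "y mod K \<le> i mod r + u"
    by simp
  then have "y mod K < r + T - 1"
    using iu(2) mod_less_divisor[OF assms(1), of i] by linarith
  ultimately show "y \<in> {..<T + block_enum K r (T - 1)} -
      {y. y div K < (T - 1) div r \<and> r + T - 1 \<le> y mod K}"
    using iu by auto
qed

lemma subset_secret_sumset:
  assumes "0 < r" "r \<le> K" "0 < T"
  shows "{..<T + block_enum K r (T - 1)} - {y. y div K < (T - 1) div r \<and> r + T - 1 \<le> y mod K}
    \<subseteq> secret_sumset K T r"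
proof
  define Q R where "Q = (T - 1) div r" and "R = (T - 1) mod r"
  have T1: "T - 1 = Q * r + R" and "R < r"
    unfolding Q_def R_def using assms(1) by simp_all
  have last: "block_enum K r (T - 1) = R + K * Q"
    unfolding block_enum_def Q_def R_def ..
  fix y
  assume y: "y \<in> {..<T + block_enum K r (T - 1)} - {y. y div K < Q \<and> r + T - 1 \<le> y mod K}"
  define t z where "t = y div K" and "z = y mod K"
  have yz: "y = z + K * t"
    unfolding t_def z_def by simp
  have mem: "y \<in> secret_sumset K T r" if "i < T" "u < T" "y = block_enum K r i + u" for i u
    unfolding secret_sumset_def using that by (auto intro: sumsetI)
  show "y \<in> secret_sumset K T r"
  proof (cases "t < Q")
    case True
    then have block_fits: "t * r + r \<le> T - 1"
      using T1 mult_le_mono1[of "Suc t" Q r] by simp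
    have "z < r + T - 1"
      using y True unfolding t_def z_def by auto
    show ?thesis
    proof (cases "z < r")
      case True
      show ?thesis
        by (rule mem[of "t * r + z" 0]) (use True block_fits yz in \<open>simp_all add: block_enum_eq\<close>)
    next
      case False
      have "block_enum K r (t * r + (r - 1)) = r - 1 + K * t"
        using assms(1) by (intro block_enum_eq) simp
      then show ?thesis
        by (intro mem[of "t * r + (r - 1)" "z - (r - 1)"])
          (use False block_fits \<open>z < r + T - 1\<close> yz in simp_all)
    qed
  next
    case False
    then have "K * Q \<le> y"
      using yz by (metis le_add2 le_trans mult_le_mono2 not_le)
    have "y < T + (R + K * Q)"
      using y last by simp
    show ?thesis
    proof (cases "y < R + K * Q")
      case True
      have "block_enum K r (Q * r + (y - K * Q)) = y - K * Q + K * Q"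
        using True \<open>R < r\<close> by (intro block_enum_eq) linarith
      then show ?thesis
        by (intro mem[of "Q * r + (y - K * Q)" 0]) (use True \<open>K * Q \<le> y\<close> T1 in simp_all)
    next
      case False
      show ?thesis
        by (rule mem[of "T - 1" "y - (R + K * Q)"])
          (use False \<open>y < T + (R + K * Q)\<close> last assms(3) in simp_all)
    qed
  qed
qed

lemma secret_sumset_eq:
  assumes "0 < r" "r \<le> K" "0 < T"
  shows "secret_sumset K T r =
    {..<T + block_enum K r (T - 1)} - {y. y div K < (T - 1) div r \<and> r + T - 1 \<le> y mod K}"
  using secret_sumset_subset[OF assms(1,2)] subset_secret_sumset[OF assms] by (rule antisym)

lemma card_secret_sumset:
  assumes "0 < r" "r \<le> K" "0 < T"
  shows "card (secret_sumset K T r) = 2 * T - 1 + (T - 1) div r * min (T - 1) (K - r)"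
proof -
  define Q R where "Q = (T - 1) div r" and "R = (T - 1) mod r"
  define holes where "holes = {y. y div K < Q \<and> r + T - 1 \<le> y mod K}"
  have T1: "T - 1 = r * Q + R" unfolding Q_def R_def by simp
  have K: "0 < K" using assms by simp
  have "holes \<subseteq> {..<T + (R + K * Q)}"
    unfolding holes_def using K by (auto simp: div_less_iff_less_mult mult.commute)
  moreover have "secret_sumset K T r = {..<T + (R + K * Q)} - holes"
    unfolding secret_sumset_eq[OF assms] holes_def block_enum_def Q_def R_def ..
  ultimately have "card (secret_sumset K T r) = T + (R + K * Q) - Q * (K - (r + T - 1))"
    using card_div_mod_box[OF K] by (simp add: card_Diff_subset finite_subset holes_def)
  also have "K - (r + T - 1) = (K - r) - min (T - 1) (K - r)"
    using assms(3) by simp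
  also have "K * Q = r * Q + (K - r) * Q"
    using assms(2) by (simp add: diff_mult_distrib)
  finally have "card (secret_sumset K T r) = T + (R + r * Q) + Q * min (T - 1) (K - r)"
    using diff_mult_distrib2[of Q "K - r" "min (T - 1) (K - r)"]
      mult_le_mono2[of "min (T - 1) (K - r)" "K - r" Q]
    by (simp add: mult.commute)
  then show ?thesis
    unfolding Q_def[symmetric] using T1 assms(3) by linarith
qed

lemma card_secret_sumset_antimono:
  assumes "0 < r" "r \<le> s" "s \<le> K" "0 < T"
  shows "card (secret_sumset K T s) \<le> card (secret_sumset K T r)"
proof -
  have "(T - 1) div s * min (T - 1) (K - s) \<le> (T - 1) div r * min (T - 1) (K - r)"
    using assms by (intro mult_le_mono div_le_mono2) auto
  then show ?thesis
    using assms by (simp add: card_secret_sumset diff_le_mono)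
qed

lemma sumset_gasp_cross_subset:
  assumes "0 < r" "r \<le> K" "r + K * L + 1 \<le> T + 2 * K"
  shows "sumset ((+) (K * L) ` block_enum K r ` {..<T}) ((*) K ` {..<L})
    \<subseteq> {..<K * L + T + K - 1} \<union> (+) (2 * (K * L)) ` secret_sumset K T r"
proof
  fix x assume "x \<in> sumset ((+) (K * L) ` block_enum K r ` {..<T}) ((*) K ` {..<L})"
  then obtain i l where "i < T" "l < L" and x: "x = K * L + block_enum K r i + K * l"
    by (auto elim!: sumsetE)
  define t j where "t = i div r" and "j = i mod r"
  have "j < r" unfolding j_def using assms(1) by simp
  have x_tj: "x = K * L + j + K * (t + l)"
    unfolding x block_enum_def t_def j_def by (simp add: algebra_simps)
  show "x \<in> {..<K * L + T + K - 1} \<union> (+) (2 * (K * L)) ` secret_sumset K T r"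
  proof (cases "t + l < L")
    case True
    then have "K * (t + l) + K \<le> K * L"
      using mult_le_mono2[of "Suc (t + l)" L K] by simp
    then have "x < K * L + T + K - 1"
      using x_tj \<open>j < r\<close> assms(3) by linarith
    then show ?thesis by simp
  next
    case False
    define i' where "i' = (t + l - L) * r + j"
    have "i' \<le> t * r + j"
      unfolding i'_def using \<open>l < L\<close> by (intro add_le_mono1 mult_le_mono1) simp
    also have "\<dots> = i"
      unfolding t_def j_def by simp
    finally have "block_enum K r i' + 0 \<in> secret_sumset K T r"
      unfolding secret_sumset_def using \<open>i < T\<close>
      by (intro sumsetI[of "block_enum K r i'" _ 0]) auto
    moreover have "K * L \<le> K * (t + l)"
      using False by simp
    then have "x = 2 * (K * L) + (block_enum K r i' + 0)"
      unfolding x_tj i'_def block_enum_eq[OF \<open>j < r\<close>] diff_mult_distrib2 by linarith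
    ultimately show ?thesis by blast
  qed
qed

lemma sumset_gasp:
  assumes "0 < r" "r \<le> K" "0 < T" "r + K * L + 1 \<le> T + 2 * K"
  shows "sumset (set (gasp_alpha K L T r)) (set (gasp_beta K L T))
    = {..<K * L + T + K - 1} \<union> (+) (2 * (K * L)) ` secret_sumset K T r"
proof -
  let ?secret = "(+) (K * L) ` block_enum K r ` {..<T}"
  have "sumset {..<K} (set (gasp_beta K L T)) = {..<K * L + T + K - 1}"
    using assms by (auto simp: set_gasp_beta sumset_Un_right sumset_lessThan_multiples
        sumset_lessThan_shifted_lessThan)
  moreover have "sumset ?secret ((+) (K * L) ` {..<T}) = (+) (2 * (K * L)) ` secret_sumset K T r"
    unfolding sumset_image_add secret_sumset_def by (simp add: mult_2)
  ultimately show ?thesis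
    using sumset_gasp_cross_subset[OF assms(1,2,4)]
    by (auto simp: set_gasp_alpha[OF assms(1,2)] set_gasp_beta sumset_Un_left sumset_Un_right)
qed

lemma gasp_N_eq:
  assumes "0 < r" "r \<le> K" "0 < T" "0 < L" "r + K * L + 1 \<le> T + 2 * K"
  shows "gasp_N K L T r = min (2 * (K * L)) (K * L + T + K - 1) + card (secret_sumset K T r)"
  unfolding gasp_N_def sumset_gasp[OF assms(1-3,5)]
proof (rule card_lessThan_Un_image_add)
  show "finite (secret_sumset K T r)"
    unfolding secret_sumset_eq[OF assms(1-3)] by simp
  have "block_enum K r 0 = 0"
    unfolding block_enum_def by simp
  then show "{..<T} \<subseteq> secret_sumset K T r"
    unfolding secret_sumset_def using assms(3) by (auto intro: sumsetI[of 0])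
  have "K \<le> K * L"
    using assms(4) by simp
  then show "K * L + T + K - 1 \<le> 2 * (K * L) + T"
    by linarith
qed

theorem lemma2:
  fixes K L T :: nat and \<phi> :: int
  assumes "0 < K" and "0 < L" and "0 < T" and "L \<le> K"
    and "\<phi> = int T - 1 - int K * int L + 2 * int K"
    and "\<phi> \<ge> 1"
  shows "\<forall>r::nat. 1 \<le> r \<and> r \<le> min K (min T (nat \<phi>)) \<longrightarrow>
           gasp_N K L T (min K (min T (nat \<phi>))) \<le> gasp_N K L T r"
proof (intro allI impI)
  fix r :: nat
  define m where "m = min K (min T (nat \<phi>))"
  assume "1 \<le> r \<and> r \<le> min K (min T (nat \<phi>))"
  then have "0 < r" "r \<le> m" unfolding m_def by auto
  have admissible: "0 < s \<and> s \<le> K \<and> s + K * L + 1 \<le> T + 2 * K" if "0 < s" "s \<le> m" for s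
  proof -
    have "int s \<le> \<phi>"
      using that assms(6) unfolding m_def by (simp add: le_nat_iff)
    then have "int (s + K * L + 1) \<le> int (T + 2 * K)"
      using assms(5) by simp
    then show ?thesis
      using that unfolding m_def by (simp only: of_nat_le_iff) simp
  qed
  show "gasp_N K L T m \<le> gasp_N K L T r"
    using admissible[of r] admissible[of m] \<open>0 < r\<close> \<open>r \<le> m\<close> assms(2,3)
    by (simp add: gasp_N_eq card_secret_sumset_antimono)
qed

end
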